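(* Let $\mathcal{M}=\langle S,\iota,\mathsf{Act},P,\mathsf{Z},\mathsf{obs}\rangle$ be an MDP, let $B\subseteq\mathsf{Bel}$ be a convex set of beliefs with finitely many vertices, and let $z\in\mathsf{Z}$. Then $V(\mathsf{est}^{\mathsf{up}}(B,z))=V(\mathsf{est}^{\mathsf{up}}(V(B),z))$.
   Context: An MDP is a tuple $\langle S,\iota,\mathsf{Act},P,\mathsf{Z},\mathsf{obs}\rangle$: finite state set $S$, initial distribution $\iota\in\mathsf{Distr}(S)$, finite action set $\mathsf{Act}$, partial transition function $P\colon S\times\mathsf{Act}\rightharpoonup\mathsf{Distr}(S)$ (write $P(s,\alpha,s')=P(s,\alpha)(s')$), finite observation set $\mathsf{Z}$, observation function $\mathsf{obs}\colon S\to\mathsf{Distr}(\mathsf{Z})$; $\mathsf{AvAct}(s)=\{\alpha\mid P(s,\alpha)\text{ defined}\}\neq\emptyset$. Beliefs: $\mathsf{Bel}=\mathsf{Distr}(S)\cup\{\mathbf{0}\}$ ($\mathbf{0}$ the zero function on $S$), viewed as vectors in $\mathbb{R}^S$. For $\mathsf{bel}\in\mathsf{Bel}$ and $z\in\mathsf{Z}$, $\mathsf{bel}'\in\mathsf{est}^{\mathsf{up}}(\mathsf{bel},z)$ iff there is $\varsigma\colon S\to\mathsf{Distr}(\mathsf{Act})$ with $\varsigma(s)$ supported in $\mathsf{AvAct}(s)$ such that for all $s'$: $\mathsf{bel}'(s')=\dfrac{\sum_s\mathsf{bel}(s)\sum_\alpha\varsigma(s)(\alpha)P(s,\alpha,s')\mathsf{obs}(s')(z)}{\sum_s\mathsf{bel}(s)\sum_\alpha\varsigma(s)(\alpha)\sum_{\hat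 s}P(s,\alpha,\hat s)\mathsf{obs}(\hat s)(z)}$ (with $0/0=0$). For $B\subseteq\mathsf{Bel}$, $\mathsf{est}^{\mathsf{up}}(B,z)=\bigcup_{\mathsf{bel}\in B}\mathsf{est}^{\mathsf{up}}(\mathsf{bel},z)$. $B$ is convex if it equals its convex hull. A belief $\mathsf{bel}\in B$ is interior if it is a convex combination of elements of $B\setminus\{\mathsf{bel}\}$; $V(B)\subseteq B$ denotes the set of non-interior elements (the vertices of the convex hull of $B$). *)

theory Defs
  imports "HOL-Analysis.Analysis"
begin

text \<open>States, actions, observations are finite types 's, 'a, 'z (S, Act, Z are UNIV).
  Beliefs are vectors in R^S, represented as real ^ 's.\<close>

definition is_distr :: "('s::finite \<Rightarrow> real) \<Rightarrow> bool" where
  "is_distr d \<longleftrightarrow> (\<forall>s. 0 \<le> d s) \<and> (\<Sum>s\<in>UNIV. d s) = 1"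

definition AvAct :: "('s \<Rightarrow> 'a \<Rightarrow> ('s \<Rightarrow> real) option) \<Rightarrow> 's \<Rightarrow> 'a set" where
  "AvAct P s = {a. P s a \<noteq> None}"

definition is_MDP :: "('s::finite \<Rightarrow> real) \<Rightarrow> ('s \<Rightarrow> 'a::finite \<Rightarrow> ('s \<Rightarrow> real) option)
    \<Rightarrow> ('s \<Rightarrow> 'z::finite \<Rightarrow> real) \<Rightarrow> bool" where
  "is_MDP iota P obs \<longleftrightarrow> is_distr iota
     \<and> (\<forall>s a d. P s a = Some d \<longrightarrow> is_distr d)
     \<and> (\<forall>s. is_distr (obs s))
     \<and> (\<forall>s. AvAct P s \<noteq> {})"

text \<open>P(s,a,s'), only used where P s a is defined (otherwise multiplied by zero).\<close>
definition Pr :: "('s \<Rightarrow> 'a \<Rightarrow> ('s \<Rightarrow> real) option) \<Rightarrow> 's \<Rightarrow> 'a \<Rightarrow> 's \<Rightarrow> real" where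
  "Pr P s a s' = (case P s a of None \<Rightarrow> 0 | Some d \<Rightarrow> d s')"

definition Bel :: "(real ^ 's::finite) set" where
  "Bel = {b. is_distr (\<lambda>s. b $ s)} \<union> {0}"

text \<open>Memoryless randomized state-dependent choice of available actions.\<close>
definition valid_sched :: "('s \<Rightarrow> 'a \<Rightarrow> ('s \<Rightarrow> real) option) \<Rightarrow> ('s \<Rightarrow> 'a::finite \<Rightarrow> real) \<Rightarrow> bool" where
  "valid_sched P \<sigma> \<longleftrightarrow> (\<forall>s. is_distr (\<sigma> s) \<and> (\<forall>a. 0 < \<sigma> s a \<longrightarrow> a \<in> AvAct P s))"

text \<open>Division by zero is 0 in Isabelle, matching the convention 0/0 = 0.\<close>
definition est_up1 :: "('s::finite \<Rightarrow> 'a::finite \<Rightarrow> ('s \<Rightarrow> real) option) \<Rightarrow> ('s \<Rightarrow> 'z \<Rightarrow> real)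
    \<Rightarrow> real ^ 's \<Rightarrow> 'z \<Rightarrow> (real ^ 's) set" where
  "est_up1 P obs bel z = {bel'. \<exists>\<sigma>. valid_sched P \<sigma> \<and>
     (\<forall>s'. bel' $ s' =
        (\<Sum>s\<in>UNIV. bel $ s * (\<Sum>a\<in>UNIV. \<sigma> s a * Pr P s a s' * obs s' z))
        / (\<Sum>s\<in>UNIV. bel $ s * (\<Sum>a\<in>UNIV. \<sigma> s a * (\<Sum>t\<in>UNIV. Pr P s a t * obs t z))))}"

definition est_up :: "('s::finite \<Rightarrow> 'a::finite \<Rightarrow> ('s \<Rightarrow> real) option) \<Rightarrow> ('s \<Rightarrow> 'z \<Rightarrow> real)
    \<Rightarrow> (real ^ 's) set \<Rightarrow> 'z \<Rightarrow> (real ^ 's) set" where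
  "est_up P obs B z = (\<Union>bel\<in>B. est_up1 P obs bel z)"

definition Vert :: "('v::real_vector) set \<Rightarrow> 'v set" where
  "Vert B = {b \<in> B. b \<notin> convex hull (B - {b})}"

end

theory Submission
  imports Defs
begin

(* For a fixed scheduler the update maps bel to the normalisation of L bel, where L is linear
   and nonnegative on beliefs. Normalising a convex combination of nonnegative vectors yields a
   convex combination of their normalisations, reweighted by their masses; hence est_up(B, z)
   lies in the convex hull of est_up(V(B), z), and it also contains that set. The two sets thus
   have the same convex hull, and the non-interior elements of a set are exactly the extreme
   points of its convex hull. *)

lemma convex_hull_finite_subset:
  assumes "x \<in> convex hull S"
  obtains T where "finite T" "T \<subseteq> S" "x \<in> convex hull T"
proof -
  from assms obtain T u where "finite T" "T \<subseteq> S" "\<forall>v\<in>T. 0 \<le> u v" "sum u T = 1"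
      "(\<Sum>v\<in>T. u v *\<^sub>R v) = x"
    unfolding convex_hull_explicit by blast
  with that show thesis by (auto simp: convex_hull_finite)
qed

lemma extreme_point_of_convex_hull_iff:
  "x extreme_point_of (convex hull S) \<longleftrightarrow> x \<in> S \<and> x \<notin> convex hull (S - {x})"
proof
  assume x: "x extreme_point_of (convex hull S)"
  then have "convex (convex hull S - {x})"
    by (simp add: extreme_point_of_stillconvex)
  then have "convex hull (S - {x}) \<subseteq> convex hull S - {x}"
    by (intro hull_minimal) (auto intro: hull_inc)
  with x show "x \<in> S \<and> x \<notin> convex hull (S - {x})"
    using extreme_point_of_convex_hull by blast
next
  assume x: "x \<in> S \<and> x \<notin> convex hull (S - {x})"
  show "x extreme_point_of (convex hull S)"
    unfolding extreme_point_of_def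
  proof (intro conjI ballI notI)
    show "x \<in> convex hull S" using x by (simp add: hull_inc)
    fix a b assume "a \<in> convex hull S" "b \<in> convex hull S" and ab: "x \<in> open_segment a b"
    then obtain Ta Tb where T: "finite Ta" "Ta \<subseteq> S" "a \<in> convex hull Ta"
        "finite Tb" "Tb \<subseteq> S" "b \<in> convex hull Tb"
      by (metis convex_hull_finite_subset)
    define T where "T = Ta \<union> Tb - {x}"
    have "T \<subseteq> S - {x}" using T by (auto simp: T_def)
    then have "x \<notin> convex hull T"
      using x hull_mono by blast
    then have "x extreme_point_of (convex hull (insert x T))"
      using T by (intro extreme_point_of_convex_hull_insert) (auto simp: T_def)
    moreover have "a \<in> convex hull (insert x T)" "b \<in> convex hull (insert x T)"
      using T hull_mono[of Ta "insert x T" convex] hull_mono[of Tb "insert x T" convex]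
      by (auto simp: T_def)
    ultimately show False
      using ab by (auto simp: extreme_point_of_def)
  qed
qed

lemma Vert_eq_extreme_points: "Vert S = {x. x extreme_point_of (convex hull S)}"
  by (auto simp: Vert_def extreme_point_of_convex_hull_iff)

lemma Vert_convex_hull_cong: "convex hull S = convex hull T \<Longrightarrow> Vert S = Vert T"
  by (simp add: Vert_eq_extreme_points)

definition mass :: "real ^ 'n \<Rightarrow> real" where
  "mass x = (\<Sum>i\<in>UNIV. x $ i)"

(* Since inverse 0 = 0, vectors of mass 0 are sent to 0, as with the convention 0/0 = 0. *)
definition normalize_mass :: "real ^ 'n \<Rightarrow> real ^ 'n" where
  "normalize_mass x = inverse (mass x) *\<^sub>R x"

lemma linear_mass: "linear mass"
  by (auto intro!: linearI simp: mass_def sum.distrib sum_distrib_left)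

lemma mass_eq_0_iff_nonneg: "0 \<le> x \<Longrightarrow> mass x = 0 \<longleftrightarrow> x = 0"
  by (simp add: mass_def sum_nonneg_eq_0_iff less_eq_vec_def vec_eq_iff)

lemma mass_scaleR_normalize_mass: "0 \<le> x \<Longrightarrow> mass x *\<^sub>R normalize_mass x = x"
  by (cases "mass x = 0") (simp_all add: normalize_mass_def mass_eq_0_iff_nonneg)

lemma normalize_mass_convex_hull_subset:
  assumes "\<And>x. x \<in> S \<Longrightarrow> 0 \<le> x"
  shows "normalize_mass ` (convex hull S) \<subseteq> convex hull (normalize_mass ` S)"
proof clarify
  fix y assume "y \<in> convex hull S"
  then obtain T u where T: "finite T" "T \<subseteq> S" and u: "\<forall>v\<in>T. 0 \<le> u v" "sum u T = 1"
    and y: "y = (\<Sum>v\<in>T. u v *\<^sub>R v)"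
    unfolding convex_hull_explicit by auto
  have nonneg: "0 \<le> mass v" if "v \<in> T" for v
    using assms T that by (auto simp: mass_def less_eq_vec_def intro: sum_nonneg)
  have mass_y: "mass y = (\<Sum>v\<in>T. u v * mass v)"
    by (simp add: y linear_sum[OF linear_mass] linear_scale[OF linear_mass] o_def)
  show "normalize_mass y \<in> convex hull (normalize_mass ` S)"
  proof (cases "mass y = 0")
    case True
    obtain v where v: "v \<in> T" "u v \<noteq> 0"
      using u(2) by (metis sum.neutral zero_neq_one)
    have "\<forall>v\<in>T. u v * mass v = 0"
      using True T(1) u(1) nonneg by (simp add: mass_y sum_nonneg_eq_0_iff)
    with v have "mass v = 0" by auto
    then have "normalize_mass v = normalize_mass y"
      using True by (simp add: normalize_mass_def)
    then show ?thesis
      using v T by (metis hull_inc image_eqI subsetD)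
  next
    case False
    have y_decomp: "y = (\<Sum>v\<in>T. u v *\<^sub>R (mass v *\<^sub>R normalize_mass v))"
      unfolding y using assms T(2) by (intro sum.cong refl) (metis mass_scaleR_normalize_mass subsetD)
    have "normalize_mass y = inverse (mass y) *\<^sub>R y"
      by (simp add: normalize_mass_def)
    also have "\<dots> = inverse (mass y) *\<^sub>R (\<Sum>v\<in>T. u v *\<^sub>R (mass v *\<^sub>R normalize_mass v))"
      using y_decomp by (rule arg_cong)
    also have "\<dots> = (\<Sum>v\<in>T. (u v * mass v / mass y) *\<^sub>R normalize_mass v)"
      by (simp add: scaleR_sum_right divide_inverse_commute)
    also have "\<dots> \<in> convex hull (normalize_mass ` S)"
    proof (rule convex_sum[OF T(1) convex_convex_hull])
      show "(\<Sum>v\<in>T. u v * mass v / mass y) = 1"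
        using False by (simp add: mass_y flip: sum_divide_distrib)
      show "0 \<le> u v * mass v / mass y" if "v \<in> T" for v
        using that u(1) nonneg mass_y sum_nonneg[of T "\<lambda>v. u v * mass v"] by simp
      show "normalize_mass v \<in> convex hull (normalize_mass ` S)" if "v \<in> T" for v
        using that T(2) by (auto intro: hull_inc)
    qed
    finally show ?thesis .
  qed
qed

definition unnormalized_posterior ::
    "('s::finite \<Rightarrow> 'a::finite \<Rightarrow> ('s \<Rightarrow> real) option) \<Rightarrow> ('s \<Rightarrow> 'z \<Rightarrow> real)
      \<Rightarrow> ('s \<Rightarrow> 'a \<Rightarrow> real) \<Rightarrow> 'z \<Rightarrow> real ^ 's \<Rightarrow> real ^ 's" where
  "unnormalized_posterior P obs \<sigma> z bel =
     (\<chi> s'. \<Sum>s\<in>UNIV. bel $ s * (\<Sum>a\<in>UNIV. \<sigma> s a * Pr P s a s' * obs s' z))"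

lemma linear_unnormalized_posterior: "linear (unnormalized_posterior P obs \<sigma> z)"
  by (auto intro!: linearI
      simp: unnormalized_posterior_def vec_eq_iff sum.distrib sum_distrib_left algebra_simps)

lemma unnormalized_posterior_nonneg:
  assumes "is_MDP iota P obs" "valid_sched P \<sigma>" "bel \<in> Bel"
  shows "0 \<le> unnormalized_posterior P obs \<sigma> z bel"
proof -
  have "0 \<le> bel $ s" "0 \<le> \<sigma> s a" "0 \<le> Pr P s a t" "0 \<le> obs t z" for s a t
    using assms by (auto simp: Bel_def is_distr_def valid_sched_def is_MDP_def Pr_def
        split: option.splits)
  then show ?thesis
    by (auto simp: unnormalized_posterior_def less_eq_vec_def intro!: sum_nonneg mult_nonneg_nonneg)
qed

lemma mass_unnormalized_posterior:
  "mass (unnormalized_posterior P obs \<sigma> z bel) =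
     (\<Sum>s\<in>UNIV. bel $ s * (\<Sum>a\<in>UNIV. \<sigma> s a * (\<Sum>t\<in>UNIV. Pr P s a t * obs t z)))"
proof -
  have swap_inner: "(\<Sum>a\<in>UNIV. \<sigma> s a * (\<Sum>t\<in>UNIV. Pr P s a t * obs t z))
      = (\<Sum>t\<in>UNIV. \<Sum>a\<in>UNIV. \<sigma> s a * Pr P s a t * obs t z)" for s
  proof -
    have "(\<Sum>a\<in>UNIV. \<sigma> s a * (\<Sum>t\<in>UNIV. Pr P s a t * obs t z))
        = (\<Sum>a\<in>UNIV. \<Sum>t\<in>UNIV. \<sigma> s a * Pr P s a t * obs t z)"
      by (simp add: sum_distrib_left mult.assoc)
    also have "\<dots> = (\<Sum>t\<in>UNIV. \<Sum>a\<in>UNIV. \<sigma> s a * Pr P s a t * obs t z)"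
      by (rule sum.swap)
    finally show ?thesis .
  qed
  have "(\<Sum>s\<in>UNIV. bel $ s * (\<Sum>a\<in>UNIV. \<sigma> s a * (\<Sum>t\<in>UNIV. Pr P s a t * obs t z)))
      = (\<Sum>s\<in>UNIV. \<Sum>t\<in>UNIV. bel $ s * (\<Sum>a\<in>UNIV. \<sigma> s a * Pr P s a t * obs t z))"
    unfolding swap_inner by (simp add: sum_distrib_left)
  also have "\<dots> = (\<Sum>t\<in>UNIV. \<Sum>s\<in>UNIV. bel $ s * (\<Sum>a\<in>UNIV. \<sigma> s a * Pr P s a t * obs t z))"
    by (rule sum.swap)
  also have "\<dots> = mass (unnormalized_posterior P obs \<sigma> z bel)"
    by (simp add: mass_def unnormalized_posterior_def)
  finally show ?thesis ..
qed

lemma est_up1_eq: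
  "est_up1 P obs bel z =
     {normalize_mass (unnormalized_posterior P obs \<sigma> z bel) | \<sigma>. valid_sched P \<sigma>}"
proof -
  have "normalize_mass (unnormalized_posterior P obs \<sigma> z bel) $ s' =
      (\<Sum>s\<in>UNIV. bel $ s * (\<Sum>a\<in>UNIV. \<sigma> s a * Pr P s a s' * obs s' z))
      / (\<Sum>s\<in>UNIV. bel $ s * (\<Sum>a\<in>UNIV. \<sigma> s a * (\<Sum>t\<in>UNIV. Pr P s a t * obs t z)))" for \<sigma> s'
    by (simp add: normalize_mass_def mass_unnormalized_posterior divide_inverse_commute,
        simp add: unnormalized_posterior_def)
  then show ?thesis
    by (auto simp: est_up1_def vec_eq_iff)
qed

lemma est_up_convex_hull_subset:
  assumes "is_MDP iota P obs" "V \<subseteq> Bel"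
  shows "est_up P obs (convex hull V) z \<subseteq> convex hull (est_up P obs V z)"
proof
  fix bel' assume "bel' \<in> est_up P obs (convex hull V) z"
  then obtain \<sigma> bel where \<sigma>: "valid_sched P \<sigma>" and bel: "bel \<in> convex hull V"
    and bel': "bel' = normalize_mass (unnormalized_posterior P obs \<sigma> z bel)"
    by (auto simp: est_up_def est_up1_eq)
  let ?L = "unnormalized_posterior P obs \<sigma> z"
  have "?L bel \<in> convex hull (?L ` V)"
    using bel by (metis convex_hull_linear_image image_eqI linear_unnormalized_posterior)
  then have "bel' \<in> convex hull (normalize_mass ` ?L ` V)"
    using normalize_mass_convex_hull_subset[of "?L ` V"] unnormalized_posterior_nonneg[OF assms(1) \<sigma>]
      assms(2) bel' by blast
  also have "\<dots> \<subseteq> convex hull (est_up P obs V z)"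
    using \<sigma> by (intro hull_mono) (auto simp: est_up_def est_up1_eq)
  finally show "bel' \<in> convex hull (est_up P obs V z)" .
qed

theorem lemma4:
  fixes iota :: "'s::finite \<Rightarrow> real"
    and P :: "'s \<Rightarrow> 'a::finite \<Rightarrow> ('s \<Rightarrow> real) option"
    and obs :: "'s \<Rightarrow> 'z::finite \<Rightarrow> real"
    and B :: "(real ^ 's) set"
    and z :: 'z
  assumes "is_MDP iota P obs"
    and "B \<subseteq> Bel"
    and "convex B"
    and "finite (Vert B)"
    and "B = convex hull (Vert B)"
  shows "Vert (est_up P obs B z) = Vert (est_up P obs (Vert B) z)"
proof (rule Vert_convex_hull_cong)
  have "Vert B \<subseteq> B" by (auto simp: Vert_def)
  then have "est_up P obs (Vert B) z \<subseteq> est_up P obs B z"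
    by (auto simp: est_up_def)
  moreover have "est_up P obs B z \<subseteq> convex hull (est_up P obs (Vert B) z)"
    using est_up_convex_hull_subset[OF assms(1)] \<open>Vert B \<subseteq> B\<close> assms(2,5) by (metis order_trans)
  ultimately show "convex hull (est_up P obs B z) = convex hull (est_up P obs (Vert B) z)"
    by (metis hull_hull hull_mono subset_antisym)
qed

end
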